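(* Let $N$ be a Poisson process on $[0,\infty)$ with intensity $\lambda>0$, with points $0<X_1<X_2<\cdots$, and for $\epsilon>0$ let $\beta_0(x)=\beta_0^{(\epsilon)}(x)$ be the number of complete clusters in $[0,x]$ for connection threshold $\epsilon$. Let $m$ be a positive integer and $x>0$. Then $\mathbb{E}[\beta_0(x)^m]\to\mathbb{E}[N_x^m]$ as $\epsilon\to0$.
   Context: $N_x=\#\{n\ge1:X_n\le x\}$. A cluster (for threshold $\epsilon$) is a maximal set of consecutive points $X_j,\dots,X_k$ with $X_{l+1}-X_l\le\epsilon$ for $j\le l<k$; its end is $X_k+\epsilon$. $\beta_0(x)$ is the number of clusters whose end is $\le x$. *)

theory Defs
  imports "HOL-Probability.Probability"
begin

text \<open>Points of the process: \<open>X n\<close> for \<open>n \<ge> 1\<close> is the n-th arrival time,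
  given as the partial sum of the first n inter-arrival times \<open>T 0, ..., T (n-1)\<close>.\<close>
definition arrival :: "(nat \<Rightarrow> 'a \<Rightarrow> real) \<Rightarrow> nat \<Rightarrow> 'a \<Rightarrow> real" where
  "arrival T n \<omega> = (\<Sum>k<n. T k \<omega>)"

definition count_pts :: "(nat \<Rightarrow> real) \<Rightarrow> real \<Rightarrow> nat" where
  "count_pts X x = card {n. 1 \<le> n \<and> X n \<le> x}"

text \<open>A cluster (threshold eps) is a maximal run X_j..X_k of consecutive points
  with successive gaps \<le> eps; it is determined by its last index k, which is
  exactly an index k \<ge> 1 with X_(k+1) - X_k > eps. Its end is X_k + eps.
  beta0 counts clusters whose end is \<le> x.\<close>
definition cluster_last :: "(nat \<Rightarrow> real) \<Rightarrow> real \<Rightarrow> nat \<Rightarrow> bool" where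
  "cluster_last X eps k \<longleftrightarrow> 1 \<le> k \<and> X (Suc k) - X k > eps"

definition beta0 :: "(nat \<Rightarrow> real) \<Rightarrow> real \<Rightarrow> real \<Rightarrow> nat" where
  "beta0 X eps x = card {k. cluster_last X eps k \<and> X k + eps \<le> x}"

end

theory Submission
  imports Defs
begin

text \<open>
  Almost surely the arrival times are strictly increasing, only finitely many of them lie
  in [0, x], and none equals x. Once eps is smaller than every gap X(k+1) - X(k) and every
  distance x - X(k) with X(k) \<le> x, each such point is the last point of its own cluster and
  that cluster ends before x, so beta0(x) = N(x); for every eps > 0, beta0(x) \<le> N(x).
  Dominated convergence then gives the claim with N(x)^m as dominating function. It is
  integrable since N(x)^m \<le> \<Sum>n. n^m 1{X(n) \<le> x}, and X(n) is Erlang distributed, so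
  P(X(n) \<le> x) \<le> (lam x)^n / (n-1)! and the resulting series converges.
\<close>

lemma integral_dominated_convergence_at_within:
  fixes s :: "'c::first_countable_topology \<Rightarrow> 'a \<Rightarrow> 'b::{banach, second_countable_topology}"
  assumes "f \<in> borel_measurable M" "\<And>t. s t \<in> borel_measurable M" "integrable M w"
    and lim: "AE \<omega> in M. ((\<lambda>t. s t \<omega>) \<longlongrightarrow> f \<omega>) (at a within S)"
    and bound: "\<And>t. t \<in> S - {a} \<Longrightarrow> AE \<omega> in M. norm (s t \<omega>) \<le> w \<omega>"
  shows "((\<lambda>t. integral\<^sup>L M (s t)) \<longlongrightarrow> integral\<^sup>L M f) (at a within S)"
  unfolding tendsto_at_iff_sequentially comp_def
proof (intro allI impI)
  fix E :: "nat \<Rightarrow> 'c" assume E: "\<forall>i. E i \<in> S - {a}" "E \<longlonglongrightarrow> a"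
  show "(\<lambda>i. integral\<^sup>L M (s (E i))) \<longlonglongrightarrow> integral\<^sup>L M f"
  proof (rule integral_dominated_convergence[where w=w])
    show "AE \<omega> in M. (\<lambda>i. s (E i) \<omega>) \<longlonglongrightarrow> f \<omega>"
      using lim by eventually_elim (use E in \<open>auto simp: tendsto_at_iff_sequentially comp_def\<close>)
  qed (use assms E in auto)
qed

lemma measurable_count_pts[measurable]:
  fixes X :: "nat \<Rightarrow> 'a \<Rightarrow> real"
  assumes [measurable]: "\<And>n. X n \<in> borel_measurable M"
  shows "(\<lambda>\<omega>. count_pts (\<lambda>n. X n \<omega>) x) \<in> measurable M (count_space UNIV)"
  unfolding count_pts_def by measurable

lemma measurable_beta0[measurable]:
  fixes X :: "nat \<Rightarrow> 'a \<Rightarrow> real"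
  assumes [measurable]: "\<And>n. X n \<in> borel_measurable M"
  shows "(\<lambda>\<omega>. beta0 (\<lambda>n. X n \<omega>) eps x) \<in> measurable M (count_space UNIV)"
  unfolding beta0_def cluster_last_def by measurable

lemma beta0_le_count_pts:
  assumes "finite {n. 1 \<le> n \<and> X n \<le> x}" and "0 < eps"
  shows "beta0 X eps x \<le> count_pts X x"
  unfolding beta0_def count_pts_def
  by (rule card_mono) (use assms in \<open>auto simp: cluster_last_def\<close>)

lemma eventually_beta0_eq_count_pts:
  fixes X :: "nat \<Rightarrow> real"
  assumes mono: "strict_mono X"
    and fin: "finite {n. 1 \<le> n \<and> X n \<le> x}"
    and neq: "\<And>n. 1 \<le> n \<Longrightarrow> X n \<noteq> x"
  shows "\<forall>\<^sub>F eps in at_right 0. beta0 X eps x = count_pts X x"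
proof -
  define S where "S = {n. 1 \<le> n \<and> X n \<le> x}"
  have "\<forall>\<^sub>F eps in at_right 0. eps < X (Suc k) - X k \<and> eps \<le> x - X k" if "k \<in> S" for k
  proof (rule eventually_at_rightI)
    show "0 < min (X (Suc k) - X k) (x - X k)"
      using that neq[of k] mono by (auto simp: S_def strict_mono_Suc_iff)
  qed auto
  then have "\<forall>\<^sub>F eps in at_right 0. \<forall>k\<in>S. eps < X (Suc k) - X k \<and> eps \<le> x - X k"
    using fin by (intro eventually_ball_finite) (auto simp: S_def)
  with eventually_at_right_less[of 0] show ?thesis
  proof eventually_elim
    case (elim eps)
    then have "{k. cluster_last X eps k \<and> X k + eps \<le> x} = S"
      by (auto simp: S_def cluster_last_def)
    then show ?case by (simp add: beta0_def count_pts_def S_def)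
  qed
qed

lemma card_power_le_sum_power:
  fixes S :: "nat set"
  assumes "finite S" "0 \<notin> S" "0 < m"
  shows "real (card S) ^ m \<le> (\<Sum>n\<in>S. real n ^ m)"
proof (cases "S = {}")
  case True
  then show ?thesis using assms by (simp add: power_0_left)
next
  case False
  have "S \<subseteq> {1..Max S}" using assms by (auto simp: Suc_le_eq intro: gr0I)
  then have "card S \<le> Max S" using card_mono[of "{1..Max S}" S] by simp
  then have "real (card S) ^ m \<le> real (Max S) ^ m" by (intro power_mono) auto
  also have "\<dots> \<le> (\<Sum>n\<in>S. real n ^ m)"
    using assms False by (intro member_le_sum) auto
  finally show ?thesis .
qed

lemma suminf_power_indicator_infinite:
  fixes S :: "nat set"
  assumes "infinite S"
  shows "(\<Sum>n. ennreal (real n ^ m) * indicator S n) = \<infinity>"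
proof -
  have "of_nat k \<le> (\<Sum>n. ennreal (real n ^ m) * indicator S n)" for k
  proof -
    obtain F where F: "F \<subseteq> S - {0}" "finite F" "card F = k"
      using infinite_arbitrarily_large[of "S - {0}"] assms by auto
    have "of_nat k = (\<Sum>n\<in>F. (1::ennreal))" using F by simp
    also have "\<dots> \<le> (\<Sum>n\<in>F. ennreal (real n ^ m) * indicator S n)"
    proof (rule sum_mono)
      fix n assume "n \<in> F"
      then have "n \<in> S" and "1 \<le> real n" using F by auto
      then show "1 \<le> ennreal (real n ^ m) * indicator S n"
        using one_le_power[of "real n" m] by (simp add: ennreal_leI[where x=1, simplified])
    qed
    also have "\<dots> \<le> (\<Sum>n. ennreal (real n ^ m) * indicator S n)"
      by (rule sum_le_suminf) (auto simp: F)
    finally show ?thesis .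
  qed
  then have "(SUP k. of_nat k :: ennreal) \<le> (\<Sum>n. ennreal (real n ^ m) * indicator S n)"
    by (intro SUP_least)
  then show ?thesis by (simp add: ennreal_SUP_of_nat_eq_top top_unique)
qed

lemma card_power_le_suminf_power_indicator:
  fixes S :: "nat set"
  assumes "0 \<notin> S" "0 < m"
  shows "ennreal (real (card S) ^ m) \<le> (\<Sum>n. ennreal (real n ^ m) * indicator S n)"
proof (cases "finite S")
  case True
  have "ennreal (real (card S) ^ m) \<le> ennreal (\<Sum>n\<in>S. real n ^ m)"
    using card_power_le_sum_power[OF True assms] by (rule ennreal_leI)
  also have "\<dots> = (\<Sum>n\<in>S. ennreal (real n ^ m) * indicator S n)" by simp
  also have "\<dots> \<le> (\<Sum>n. ennreal (real n ^ m) * indicator S n)"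
    by (rule sum_le_suminf) (auto simp: True)
  finally show ?thesis .
qed (simp add: suminf_power_indicator_infinite)

lemma emeasure_erlang_density_atMost_le:
  assumes l: "0 < l" and a: "0 \<le> a"
  shows "emeasure (density lborel (erlang_density k l)) {..a} \<le> ennreal ((l * a) ^ Suc k / fact k)"
proof -
  define C where "C = l ^ Suc k * a ^ k / fact k"
  have "emeasure (density lborel (erlang_density k l)) {..a}
      = (\<integral>\<^sup>+ t. ennreal (erlang_density k l t) * indicator {..a} t \<partial>lborel)"
    by (simp add: emeasure_density)
  also have "\<dots> \<le> (\<integral>\<^sup>+ t. ennreal C * indicator {0..a} t \<partial>lborel)"
  proof (rule nn_integral_mono)
    fix t :: real
    show "ennreal (erlang_density k l t) * indicator {..a} t \<le> ennreal C * indicator {0..a} t"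
    proof (cases "0 \<le> t \<and> t \<le> a")
      case True
      have "l ^ Suc k * t ^ k * exp (- l * t) \<le> l ^ Suc k * a ^ k * 1"
        using True l by (intro mult_mono power_mono) auto
      then have "erlang_density k l t \<le> C"
        using True by (simp add: erlang_density_def C_def divide_right_mono)
      then show ?thesis using True by (simp add: ennreal_leI)
    qed (auto simp: erlang_density_def)
  qed
  also have "\<dots> = ennreal C * ennreal a"
    using a by (simp add: nn_integral_cmult_indicator)
  also have "\<dots> = ennreal ((l * a) ^ Suc k / fact k)"
    using l a by (simp add: ennreal_mult[symmetric] C_def power_mult_distrib mult_ac)
  finally show ?thesis .
qed

lemma (in prob_space) erlang_distributed_emeasure_le:
  assumes "distributed M lborel X (erlang_density k l)" and "0 < l" and "0 \<le> a"
  shows "emeasure M {\<omega>\<in>space M. X \<omega> \<le> a} \<le> ennreal ((l * a) ^ Suc k / fact k)"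
proof -
  have "emeasure M {\<omega>\<in>space M. X \<omega> \<le> a}
      = (\<integral>\<^sup>+ t. ennreal (erlang_density k l t) * indicator {..a} t \<partial>lborel)"
    using distributed_emeasure[OF assms(1), of "{..a}"] by (simp add: vimage_def Int_def conj_commute)
  also have "\<dots> = emeasure (density lborel (erlang_density k l)) {..a}"
    by (simp add: emeasure_density)
  finally show ?thesis
    using emeasure_erlang_density_atMost_le[OF assms(2,3)] by simp
qed

lemma power_le_fact_mult_exp:
  fixes x :: real
  assumes "0 \<le> x"
  shows "x ^ k \<le> fact k * exp x"
proof -
  have "x ^ k /\<^sub>R fact k \<le> (\<Sum>i. x ^ i /\<^sub>R fact i)"
    using sum_le_suminf[OF summable_exp_generic[of x], of "{k}"] assms by simp
  then have "x ^ k / fact k \<le> exp x"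
    by (simp add: exp_def divide_inverse ac_simps)
  then show ?thesis by (simp add: divide_le_eq ac_simps)
qed

lemma summable_power_mult_power_div_fact:
  fixes y :: real
  assumes y: "0 \<le> y"
  shows "summable (\<lambda>n. real n ^ m * (y ^ n / fact (n - 1)))"
proof (rule summable_comparison_test')
  show "summable (\<lambda>n. fact (Suc m) * ((exp 1 * y) ^ n /\<^sub>R fact n))"
    by (intro summable_mult summable_exp_generic)
  fix n :: nat assume "1 \<le> n"
  then have fact_n: "fact n = real n * fact (n - 1)"
    by (simp add: fact_reduce)
  have "real n ^ m * (y ^ n / fact (n - 1)) = real n ^ Suc m * y ^ n / fact n"
    using \<open>1 \<le> n\<close> unfolding fact_n by (simp add: field_simps)
  also have "\<dots> \<le> fact (Suc m) * exp (real n) * y ^ n / fact n"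
    using y by (intro divide_right_mono mult_right_mono power_le_fact_mult_exp) auto
  also have "\<dots> = fact (Suc m) * ((exp 1 * y) ^ n /\<^sub>R fact n)"
    by (simp add: power_mult_distrib exp_of_nat_mult[symmetric] field_simps)
  finally show "norm (real n ^ m * (y ^ n / fact (n - 1)))
      \<le> fact (Suc m) * ((exp 1 * y) ^ n /\<^sub>R fact n)"
    using y by simp
qed

locale exponential_arrivals = prob_space M for M :: "'a measure" +
  fixes T :: "nat \<Rightarrow> 'a \<Rightarrow> real" and lam :: real
  assumes lam_pos: "0 < lam"
    and indep_T: "indep_vars (\<lambda>_. borel) T UNIV"
    and distributed_T: "\<And>k. distributed M lborel (T k) (exponential_density lam)"
begin

lemma measurable_T[measurable]: "T k \<in> borel_measurable M"
  using distributed_measurable[OF distributed_T] by simp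

lemma measurable_arrival[measurable]: "(\<lambda>\<omega>. arrival T n \<omega>) \<in> borel_measurable M"
  unfolding arrival_def by measurable

lemma distributed_arrival:
  assumes "1 \<le> n"
  shows "distributed M lborel (arrival T n) (erlang_density (n - 1) lam)"
proof -
  have "distributed M lborel (\<lambda>\<omega>. \<Sum>k\<in>{..<n}. T k \<omega>) (erlang_density (card {..<n} - 1) lam)"
    using assms
    by (intro exponential_distributed_sum lam_pos distributed_T indep_vars_subset[OF indep_T])
       (auto simp: lessThan_empty_iff)
  then show ?thesis by (simp add: arrival_def[abs_def])
qed

lemma emeasure_arrival_le:
  assumes "1 \<le> n" and "0 \<le> x"
  shows "emeasure M {\<omega>\<in>space M. arrival T n \<omega> \<le> x} \<le> ennreal ((lam * x) ^ n / fact (n - 1))"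
  using erlang_distributed_emeasure_le[OF distributed_arrival lam_pos] assms by simp

lemma AE_strict_mono_arrival: "AE \<omega> in M. strict_mono (\<lambda>n. arrival T n \<omega>)"
proof -
  have "AE \<omega> in M. 0 < T k \<omega>" for k
  proof -
    have "prob {\<omega>\<in>space M. T k \<omega> \<le> 0} = 0"
      using exponential_distributedD_le[OF distributed_T, of 0] lam_pos by simp
    then show ?thesis
      by (subst AE_iff_measurable[where N="{\<omega>\<in>space M. T k \<omega> \<le> 0}"])
         (auto simp: emeasure_eq_measure not_less)
  qed
  then have "AE \<omega> in M. \<forall>k. 0 < T k \<omega>"
    by (simp add: AE_all_countable)
  then show ?thesis
    by eventually_elim (simp add: strict_mono_Suc_iff arrival_def)
qed

lemma AE_arrival_neq: "AE \<omega> in M. \<forall>n\<ge>1. arrival T n \<omega> \<noteq> x"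
proof -
  have "AE \<omega> in M. arrival T n \<omega> \<noteq> x" if "1 \<le> n" for n
  proof -
    have "(\<integral>\<^sup>+t. ennreal (erlang_density (n - 1) lam t) * indicator {x} t \<partial>lborel) = 0"
      using AE_lborel_singleton[of x] by (subst nn_integral_0_iff_AE) (auto elim: eventually_mono)
    then have "emeasure M (arrival T n -` {x} \<inter> space M) = 0"
      using distributed_emeasure[OF distributed_arrival[OF that], of "{x}"] by simp
    then show ?thesis
      by (subst AE_iff_measurable[where N="arrival T n -` {x} \<inter> space M"]) auto
  qed
  then show ?thesis
    by (simp add: AE_all_countable)
qed

lemma nn_integral_power_arrivals_finite:
  assumes "0 \<le> x"
  shows "(\<integral>\<^sup>+\<omega>. (\<Sum>n. ennreal (real n ^ m) * indicator {n. 1 \<le> n \<and> arrival T n \<omega> \<le> x} n) \<partial>M) < \<infinity>"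
proof -
  define A where "A n = {\<omega>\<in>space M. 1 \<le> n \<and> arrival T n \<omega> \<le> x}" for n
  define b where "b n = real n ^ m * ((lam * x) ^ n / fact (n - 1))" for n
  have [measurable]: "A n \<in> sets M" for n
    unfolding A_def by measurable
  have term_le: "ennreal (real n ^ m) * emeasure M (A n) \<le> ennreal (b n)" for n
  proof -
    have "emeasure M (A n) \<le> ennreal ((lam * x) ^ n / fact (n - 1))"
      using emeasure_arrival_le[of n x] assms by (cases "1 \<le> n") (auto simp: A_def)
    then have "ennreal (real n ^ m) * emeasure M (A n)
        \<le> ennreal (real n ^ m) * ennreal ((lam * x) ^ n / fact (n - 1))"
      by (rule mult_left_mono) simp
    also have "\<dots> = ennreal (b n)"
      unfolding b_def using lam_pos assms by (subst ennreal_mult) auto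
    finally show ?thesis .
  qed
  have "(\<integral>\<^sup>+\<omega>. (\<Sum>n. ennreal (real n ^ m) * indicator {n. 1 \<le> n \<and> arrival T n \<omega> \<le> x} n) \<partial>M)
      = (\<integral>\<^sup>+\<omega>. (\<Sum>n. ennreal (real n ^ m) * indicator (A n) \<omega>) \<partial>M)"
    by (intro nn_integral_cong) (simp add: A_def indicator_def)
  also have "\<dots> = (\<Sum>n. ennreal (real n ^ m) * emeasure M (A n))"
    by (simp add: nn_integral_suminf nn_integral_cmult_indicator)
  also have "\<dots> \<le> (\<Sum>n. ennreal (b n))"
    using term_le by (intro suminf_le) auto
  also have "\<dots> < \<infinity>"
  proof -
    have "summable b"
      unfolding b_def by (rule summable_power_mult_power_div_fact) (use lam_pos assms in simp)
    moreover have "0 \<le> b n" for n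
      unfolding b_def using lam_pos assms by simp
    ultimately show ?thesis
      using ennreal_suminf_neq_top by (simp add: less_top)
  qed
  finally show ?thesis .
qed

lemma AE_finite_arrivals:
  assumes "0 \<le> x"
  shows "AE \<omega> in M. finite {n. 1 \<le> n \<and> arrival T n \<omega> \<le> x}"
proof -
  let ?N = "\<lambda>\<omega>. \<Sum>n. indicator {n. 1 \<le> n \<and> arrival T n \<omega> \<le> x} n :: ennreal"
  have "?N \<in> borel_measurable M"
    by (simp add: indicator_def of_bool_def[symmetric])
  moreover have "integral\<^sup>N M ?N \<noteq> \<infinity>"
    using nn_integral_power_arrivals_finite[OF assms, of 0] by simp
  ultimately have "AE \<omega> in M. ?N \<omega> \<noteq> \<infinity>"
    by (rule nn_integral_PInf_AE)
  then show ?thesis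
    using suminf_power_indicator_infinite[where m=0] by (auto elim: eventually_mono)
qed

lemma integrable_count_pts_power:
  assumes "0 \<le> x" and "0 < m"
  shows "integrable M (\<lambda>\<omega>. real (count_pts (\<lambda>n. arrival T n \<omega>) x) ^ m)"
proof (rule integrableI_bounded)
  have "(\<integral>\<^sup>+\<omega>. norm (real (count_pts (\<lambda>n. arrival T n \<omega>) x) ^ m) \<partial>M)
      \<le> (\<integral>\<^sup>+\<omega>. (\<Sum>n. ennreal (real n ^ m) * indicator {n. 1 \<le> n \<and> arrival T n \<omega> \<le> x} n) \<partial>M)"
    unfolding count_pts_def
    using assms(2) by (intro nn_integral_mono) (simp add: card_power_le_suminf_power_indicator)
  then show "(\<integral>\<^sup>+\<omega>. norm (real (count_pts (\<lambda>n. arrival T n \<omega>) x) ^ m) \<partial>M) < \<infinity>"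
    using nn_integral_power_arrivals_finite[OF assms(1)] by (rule le_less_trans)
qed measurable

end

theorem lemma2:
  fixes M :: "'a measure" and T :: "nat \<Rightarrow> 'a \<Rightarrow> real"
    and lam x :: real and m :: nat
  assumes "prob_space M"
    and "lam > 0"
    and "prob_space.indep_vars M (\<lambda>_. borel) T UNIV"
    and "\<And>k. distributed M lborel (T k) (exponential_density lam)"
    and "m > 0" and "x > 0"
  shows "((\<lambda>eps. prob_space.expectation M
              (\<lambda>\<omega>. real (beta0 (\<lambda>n. arrival T n \<omega>) eps x) ^ m))
          \<longlongrightarrow> prob_space.expectation M (\<lambda>\<omega>. real (count_pts (\<lambda>n. arrival T n \<omega>) x) ^ m))
         (at_right 0)"
proof -
  interpret exponential_arrivals M T lam
    using assms(1-4) by (simp add: exponential_arrivals_def exponential_arrivals_axioms_def)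
  have x: "0 \<le> x" using assms(6) by simp
  show ?thesis
  proof (rule integral_dominated_convergence_at_within)
    show "integrable M (\<lambda>\<omega>. real (count_pts (\<lambda>n. arrival T n \<omega>) x) ^ m)"
      using x assms(5) by (rule integrable_count_pts_power)
    show "AE \<omega> in M. ((\<lambda>eps. real (beta0 (\<lambda>n. arrival T n \<omega>) eps x) ^ m)
        \<longlongrightarrow> real (count_pts (\<lambda>n. arrival T n \<omega>) x) ^ m) (at_right 0)"
      using AE_strict_mono_arrival AE_finite_arrivals[OF x] AE_arrival_neq[of x]
    proof eventually_elim
      case (elim \<omega>)
      then show ?case
        by (intro tendsto_eventually eventually_mono[OF eventually_beta0_eq_count_pts]) auto
    qed
    show "AE \<omega> in M. norm (real (beta0 (\<lambda>n. arrival T n \<omega>) eps x) ^ m)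
        \<le> real (count_pts (\<lambda>n. arrival T n \<omega>) x) ^ m" if "eps \<in> {0<..} - {0}" for eps
      using AE_finite_arrivals[OF x]
    proof eventually_elim
      case (elim \<omega>)
      then have "beta0 (\<lambda>n. arrival T n \<omega>) eps x \<le> count_pts (\<lambda>n. arrival T n \<omega>) x"
        using that by (intro beta0_le_count_pts) auto
      then show ?case by (simp add: power_mono)
    qed
  qed measurable
qed

end
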